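(* Let $R$ be a commutative associative ring with unit element, let $a,b\in R$, and let $m\ge 1$ be an integer. Let $T_{a,b}$ be the symmetric $2m\times 2m$ matrix over $R$ whose diagonal entries are $0$, whose entries in positions $(i,i+1)$ and $(i+1,i)$ ($1\le i\le 2m-1$) are equal to $a$, and all of whose other entries are equal to $b$. Then, with the convention $0^0=1$, $$\mathrm{Hf}(T_{a,b})=\sum_{k=0}^{m}(a-b)^{m-k}\,b^{k}\,\frac{(m+k)!}{k!\,(m-k)!\,2^{k}}.$$ (Here each coefficient $\frac{(m+k)!}{k!(m-k)!2^k}$ is a positive integer, acting on $R$ by repeated addition.)
   Context: For a symmetric matrix $A=(a_{ij})$ of order $n=2m$ over a commutative ring, the hafnian is $\mathrm{Hf}(A)=\sum a_{i_1i_2}a_{i_3i_4}\cdots a_{i_{n-1}i_n}$, where the sum runs over all partitions of $\{1,\dots,n\}$ into $m$ disjoint unordered pairs $\{i_1,i_2\},\dots,\{i_{n-1},i_n\}$ (each partition counted once, irrespective of the order of the pairs and of the elements within each pair). Diagonal entries do not enter the definition. The hafnian of the empty ($0\times 0$) matrix is $1$. *)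

theory Defs
  imports Main
begin

definition perfect_matchings :: "'a set \<Rightarrow> 'a set set set" where
  "perfect_matchings S =
     {M. (\<forall>e\<in>M. e \<subseteq> S \<and> card e = 2) \<and> (\<forall>x\<in>S. \<exists>!e. e \<in> M \<and> x \<in> e)}"

text \<open>Hafnian of an n x n matrix with entries A i j, indices 0..n-1 (n even in the paper;
  for odd n there are no perfect matchings and the sum is 0).\<close>
definition hafnian :: "nat \<Rightarrow> (nat \<Rightarrow> nat \<Rightarrow> 'a::comm_ring_1) \<Rightarrow> 'a" where
  "hafnian n A = (\<Sum>M\<in>perfect_matchings {0..<n}. \<Prod>e\<in>M. A (Min e) (Max e))"

definition T_mat :: "'a::comm_ring_1 \<Rightarrow> 'a \<Rightarrow> nat \<Rightarrow> nat \<Rightarrow> 'a" where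
  "T_mat a b i j = (if i = j then 0 else if i + 1 = j \<or> j + 1 = i then a else b)"

end

theory Submission
  imports Defs
begin

text \<open>Write T(a,b) = b + c, where c e = a - b if the pair e = {i, i+1} is an edge of the
  path 0 - 1 - ... - (2m-1) and c e = 0 otherwise. Expanding the product over each perfect
  matching M as a sum over the subsets S of M and exchanging the two sums, every matching S
  with j edges contributes c(S) b^(m-j) once for each perfect matching containing it, that
  is (2m - 2j - 1)!! times. Only matchings of path edges survive; they correspond to the
  j-subsets of {0, ..., 2m-2} without two consecutive elements, of which there are
  C(2m-j, j). With k = m - j, C(m+k, m-k) (2k-1)!! = (m+k)! / (k! (m-k)! 2^k).\<close>

lemma perfect_matchings_edge:
  "M \<in> perfect_matchings X \<Longrightarrow> e \<in> M \<Longrightarrow> e \<subseteq> X \<and> card e = 2"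
  unfolding perfect_matchings_def by auto

lemma perfect_matchings_unique:
  "M \<in> perfect_matchings X \<Longrightarrow> e \<in> M \<Longrightarrow> f \<in> M \<Longrightarrow> x \<in> e \<Longrightarrow> x \<in> f \<Longrightarrow> e = f"
  unfolding perfect_matchings_def by blast

lemma perfect_matchings_cover:
  "M \<in> perfect_matchings X \<Longrightarrow> x \<in> X \<Longrightarrow> \<exists>e\<in>M. x \<in> e"
  unfolding perfect_matchings_def by blast

lemma perfect_matchings_subset_Pow_Pow: "perfect_matchings X \<subseteq> Pow (Pow X)"
  unfolding perfect_matchings_def by auto

lemma finite_perfect_matchings: "finite X \<Longrightarrow> finite (perfect_matchings X)"
  by (meson finite_Pow_iff finite_subset perfect_matchings_subset_Pow_Pow)

lemma perfect_matchings_empty: "perfect_matchings {} = {{}}"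
  unfolding perfect_matchings_def by auto

definition matching :: "'a set \<Rightarrow> 'a set set \<Rightarrow> bool" where
  "matching X S \<longleftrightarrow> (\<forall>e\<in>S. e \<subseteq> X \<and> card e = 2) \<and> pairwise disjnt S"

lemma matching_unique: "matching X S \<Longrightarrow> e \<in> S \<Longrightarrow> f \<in> S \<Longrightarrow> x \<in> e \<Longrightarrow> x \<in> f \<Longrightarrow> e = f"
  unfolding matching_def pairwise_def disjnt_def by blast

lemma matching_subset_Pow: "matching X S \<Longrightarrow> S \<subseteq> Pow X"
  unfolding matching_def by blast

lemma matching_if_subset_perfect_matching:
  assumes "M \<in> perfect_matchings X" "S \<subseteq> M"
  shows "matching X S"
  unfolding matching_def pairwise_def disjnt_def
  using perfect_matchings_edge[OF assms(1)] perfect_matchings_unique[OF assms(1)] assms(2)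
  by blast

lemma card_Union_matching:
  assumes "finite X" "matching X S"
  shows "card (\<Union>S) = 2 * card S"
proof -
  have "card (\<Union>S) = (\<Sum>e\<in>S. card e)"
    using assms by (intro card_Union_disjoint) (auto simp: matching_def intro: finite_subset)
  also have "\<dots> = 2 * card S"
    using assms(2) by (simp add: matching_def)
  finally show ?thesis .
qed

lemma card_perfect_matching:
  assumes "finite X" "M \<in> perfect_matchings X"
  shows "card X = 2 * card M"
proof -
  have "\<Union>M = X"
    using perfect_matchings_edge[OF assms(2)] perfect_matchings_cover[OF assms(2)] by blast
  then show ?thesis
    using card_Union_matching[OF assms(1) matching_if_subset_perfect_matching[OF assms(2) order_refl]]
    by simp
qed

lemma perfect_matching_Diff:
  assumes M: "M \<in> perfect_matchings X" and "S \<subseteq> M"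
  shows "M - S \<in> perfect_matchings (X - \<Union>S)"
  unfolding perfect_matchings_def
proof (intro CollectI conjI ballI)
  fix e assume "e \<in> M - S"
  then show "e \<subseteq> X - \<Union>S" "card e = 2"
    using perfect_matchings_edge[OF M] perfect_matchings_unique[OF M] \<open>S \<subseteq> M\<close> by blast+
next
  fix x assume x: "x \<in> X - \<Union>S"
  then obtain e where "e \<in> M" "x \<in> e"
    using perfect_matchings_cover[OF M] by blast
  with x show "\<exists>!e. e \<in> M - S \<and> x \<in> e"
    using perfect_matchings_unique[OF M] by (intro ex1I[of _ e]) blast+
qed

lemma perfect_matching_Un:
  assumes S: "matching X S" and N: "N \<in> perfect_matchings (X - \<Union>S)"
  shows "N \<union> S \<in> perfect_matchings X"
  unfolding perfect_matchings_def
proof (intro CollectI conjI ballI)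
  fix e assume "e \<in> N \<union> S"
  then show "e \<subseteq> X" "card e = 2"
    using perfect_matchings_edge[OF N] S unfolding matching_def by blast+
next
  fix x assume x: "x \<in> X"
  show "\<exists>!e. e \<in> N \<union> S \<and> x \<in> e"
  proof (cases "x \<in> \<Union>S")
    case True
    then obtain e where "e \<in> S" "x \<in> e" by blast
    then show ?thesis
      using matching_unique[OF S] perfect_matchings_edge[OF N] by (intro ex1I[of _ e]) blast+
  next
    case False
    then obtain e where "e \<in> N" "x \<in> e"
      using perfect_matchings_cover[OF N] x by blast
    then show ?thesis
      using False perfect_matchings_unique[OF N] by (intro ex1I[of _ e]) blast+
  qed
qed

lemma card_perfect_matchings_containing:
  assumes "matching X S"
  shows "card {M \<in> perfect_matchings X. S \<subseteq> M} = card (perfect_matchings (X - \<Union>S))"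
proof -
  have disjoint: "N \<inter> S = {}" if "N \<in> perfect_matchings (X - \<Union>S)" for N
  proof (intro equalityI subsetI)
    fix e assume "e \<in> N \<inter> S"
    then have "e \<subseteq> X - \<Union>S" "e \<subseteq> \<Union>S" "card e = 2"
      using perfect_matchings_edge[OF that] by auto
    then have "e = {}" "card e = 2" by blast+
    then show "e \<in> {}" by simp
  qed simp
  have "{M \<in> perfect_matchings X. S \<subseteq> M} = (\<lambda>N. N \<union> S) ` perfect_matchings (X - \<Union>S)"
  proof (intro equalityI subsetI)
    fix M assume "M \<in> {M \<in> perfect_matchings X. S \<subseteq> M}"
    then have "M = (M - S) \<union> S" "M - S \<in> perfect_matchings (X - \<Union>S)"
      using perfect_matching_Diff by blast+
    then show "M \<in> (\<lambda>N. N \<union> S) ` perfect_matchings (X - \<Union>S)" by blast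
  qed (use perfect_matching_Un[OF assms] in blast)
  moreover have "inj_on (\<lambda>N. N \<union> S) (perfect_matchings (X - \<Union>S))"
    using disjoint by (intro inj_onI) blast
  ultimately show ?thesis
    by (simp add: card_image)
qed

text \<open>pairings (2k) = (2k-1)!!, the number of perfect matchings of a 2k-element set.\<close>

fun pairings :: "nat \<Rightarrow> nat" where
  "pairings 0 = 1"
| "pairings (Suc 0) = 0"
| "pairings (Suc (Suc n)) = Suc n * pairings n"

lemma card_2_obtain_partner:
  assumes "card e = 2" "x \<in> e"
  obtains y where "y \<noteq> x" "e = {x, y}"
  using assms by (metis card_2_iff insert_commute insertE singletonD)

lemma perfect_matchings_by_partner:
  assumes "x \<in> X"
  shows "perfect_matchings X = (\<Union>y\<in>X - {x}. {M \<in> perfect_matchings X. {{x, y}} \<subseteq> M})"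
proof (intro equalityI subsetI)
  fix M assume M: "M \<in> perfect_matchings X"
  obtain e where e: "e \<in> M" "x \<in> e"
    using perfect_matchings_cover[OF M assms] by blast
  then obtain y where y: "y \<noteq> x" "e = {x, y}"
    using perfect_matchings_edge[OF M] by (meson card_2_obtain_partner)
  then have "y \<in> X - {x}"
    using perfect_matchings_edge[OF M e(1)] by blast
  moreover have "{{x, y}} \<subseteq> M"
    using e y by simp
  ultimately show "M \<in> (\<Union>y\<in>X - {x}. {M \<in> perfect_matchings X. {{x, y}} \<subseteq> M})"
    using M by blast
next
  fix M assume "M \<in> (\<Union>y\<in>X - {x}. {M \<in> perfect_matchings X. {{x, y}} \<subseteq> M})"
  then show "M \<in> perfect_matchings X" by blast
qed

lemma card_perfect_matchings_by_partner:
  assumes X: "finite X" and x: "x \<in> X"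
  shows "card (perfect_matchings X) = (\<Sum>y\<in>X - {x}. card (perfect_matchings (X - {x, y})))"
proof -
  have "card (perfect_matchings X) =
      card (\<Union>y\<in>X - {x}. {M \<in> perfect_matchings X. {{x, y}} \<subseteq> M})"
    using perfect_matchings_by_partner[OF x] by (rule arg_cong[where f = card])
  also have "\<dots> = (\<Sum>y\<in>X - {x}. card {M \<in> perfect_matchings X. {{x, y}} \<subseteq> M})"
  proof (rule card_UN_disjoint)
    show "finite (X - {x})"
      using X by simp
    show "\<forall>y\<in>X - {x}. finite {M \<in> perfect_matchings X. {{x, y}} \<subseteq> M}"
      using finite_perfect_matchings[OF X] by simp
    show "\<forall>y\<in>X - {x}. \<forall>z\<in>X - {x}. y \<noteq> z \<longrightarrow>
        {M \<in> perfect_matchings X. {{x, y}} \<subseteq> M} \<inter> {M \<in> perfect_matchings X. {{x, z}} \<subseteq> M} = {}"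
    proof (intro ballI impI equalityI subsetI)
      fix y z M assume "y \<in> X - {x}" "y \<noteq> z"
        and "M \<in> {M \<in> perfect_matchings X. {{x, y}} \<subseteq> M} \<inter> {M \<in> perfect_matchings X. {{x, z}} \<subseteq> M}"
      then have "{x, y} = {x, z}" "y \<noteq> z" "y \<noteq> x"
        using perfect_matchings_unique[of M X "{x, y}" "{x, z}" x] by blast+
      then show "M \<in> {}"
        by (auto simp: doubleton_eq_iff)
    qed simp
  qed
  also have "\<dots> = (\<Sum>y\<in>X - {x}. card (perfect_matchings (X - {x, y})))"
  proof (rule sum.cong[OF refl])
    fix y assume y: "y \<in> X - {x}"
    then have "matching X {{x, y}}"
      using x unfolding matching_def by auto
    from card_perfect_matchings_containing[OF this]
    show "card {M \<in> perfect_matchings X. {{x, y}} \<subseteq> M} = card (perfect_matchings (X - {x, y}))"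
      by simp
  qed
  finally show ?thesis .
qed

lemma card_perfect_matchings: "finite X \<Longrightarrow> card (perfect_matchings X) = pairings (card X)"
proof (induction "card X" arbitrary: X rule: less_induct)
  case less
  show ?case
  proof (cases "X = {}")
    case True
    then show ?thesis by (simp add: perfect_matchings_empty)
  next
    case False
    then obtain x where x: "x \<in> X" by blast
    then obtain k where k: "card X = Suc k"
      using less.prems card_0_eq not0_implies_Suc by blast
    have "card (perfect_matchings X) = (\<Sum>y\<in>X - {x}. card (perfect_matchings (X - {x, y})))"
      using less.prems x by (rule card_perfect_matchings_by_partner)
    also have "\<dots> = (\<Sum>y\<in>X - {x}. pairings (card X - 2))"
    proof (rule sum.cong[OF refl])
      fix y assume y: "y \<in> X - {x}"
      then have "card (X - {x, y}) = card X - 2"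
        using less.prems x by (auto simp: card_Diff_subset)
      then show "card (perfect_matchings (X - {x, y})) = pairings (card X - 2)"
        using less.prems k by (simp add: less.hyps)
    qed
    also have "\<dots> = pairings (card X)"
      using less.prems x k by (cases k) simp_all
    finally show ?thesis .
  qed
qed

lemma card_matching_le:
  assumes "finite X" "matching X S"
  shows "2 * card S \<le> card X"
proof -
  have "\<Union>S \<subseteq> X"
    using assms(2) by (auto simp: matching_def)
  from card_mono[OF assms(1) this] show ?thesis
    using card_Union_matching[OF assms] by simp
qed

lemma prod_add_perfect_matching:
  fixes c :: "'a set \<Rightarrow> 'b::comm_semiring_1"
  assumes X: "finite X" and M: "M \<in> perfect_matchings X"
  shows "(\<Prod>e\<in>M. b + c e) = (\<Sum>S\<in>Pow M. (\<Prod>e\<in>S. c e) * b ^ (card X div 2 - card S))"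
proof -
  have "finite M"
    using M X perfect_matchings_subset_Pow_Pow by (meson PowD finite_Pow_iff finite_subset subsetD)
  then have "(\<Prod>e\<in>M. b + c e) = (\<Sum>S\<in>Pow M. (\<Prod>e\<in>S. c e) * (\<Prod>e\<in>M - S. b))"
    using prod_add[of M c "\<lambda>_. b"] by (simp add: add.commute)
  also have "\<dots> = (\<Sum>S\<in>Pow M. (\<Prod>e\<in>S. c e) * b ^ (card X div 2 - card S))"
  proof (rule sum.cong[OF refl])
    fix S assume "S \<in> Pow M"
    then have "card (M - S) = card X div 2 - card S"
      using card_perfect_matching[OF X M] \<open>finite M\<close> by (simp add: card_Diff_subset finite_subset)
    then show "(\<Prod>e\<in>S. c e) * (\<Prod>e\<in>M - S. b) = (\<Prod>e\<in>S. c e) * b ^ (card X div 2 - card S)"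
      by simp
  qed
  finally show ?thesis .
qed

lemma card_perfect_matchings_extending:
  assumes X: "finite X" and S: "matching X S"
  shows "card {M \<in> perfect_matchings X. S \<subseteq> M} = pairings (card X - 2 * card S)"
proof -
  have "card (X - \<Union>S) = card X - 2 * card S"
    using card_Union_matching[OF X S] matching_subset_Pow[OF S] X
    by (subst card_Diff_subset) (auto intro: finite_subset)
  then show ?thesis
    using X by (simp add: card_perfect_matchings_containing[OF S] card_perfect_matchings)
qed

lemma sum_perfect_matchings_sum_Pow:
  fixes g :: "'a set set \<Rightarrow> 'b::comm_semiring_1"
  assumes X: "finite X"
  shows "(\<Sum>M\<in>perfect_matchings X. \<Sum>S\<in>Pow M. g S) =
    (\<Sum>S | matching X S. of_nat (card {M \<in> perfect_matchings X. S \<subseteq> M}) * g S)"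
proof -
  have "(\<Sum>M\<in>perfect_matchings X. \<Sum>S\<in>Pow M. g S) =
      (\<Sum>M\<in>perfect_matchings X. \<Sum>S\<in>{S. S \<in> Pow (Pow X) \<and> S \<subseteq> M}. g S)"
  proof (rule sum.cong[OF refl])
    fix M assume "M \<in> perfect_matchings X"
    then have "Pow M = {S. S \<in> Pow (Pow X) \<and> S \<subseteq> M}"
      using perfect_matchings_subset_Pow_Pow by blast
    then show "(\<Sum>S\<in>Pow M. g S) = (\<Sum>S\<in>{S. S \<in> Pow (Pow X) \<and> S \<subseteq> M}. g S)"
      by simp
  qed
  also have "\<dots> = (\<Sum>S\<in>Pow (Pow X). of_nat (card {M \<in> perfect_matchings X. S \<subseteq> M}) * g S)"
    using X by (subst sum.swap_restrict) (simp_all add: finite_perfect_matchings)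
  also have "\<dots> = (\<Sum>S | matching X S. of_nat (card {M \<in> perfect_matchings X. S \<subseteq> M}) * g S)"
  proof (rule sum.mono_neutral_right)
    show "finite (Pow (Pow X))"
      using X by simp
    show "{S. matching X S} \<subseteq> Pow (Pow X)"
      using matching_subset_Pow by blast
    show "\<forall>S\<in>Pow (Pow X) - {S. matching X S}. of_nat (card {M \<in> perfect_matchings X. S \<subseteq> M}) * g S = 0"
    proof
      fix S assume "S \<in> Pow (Pow X) - {S. matching X S}"
      then have "{M \<in> perfect_matchings X. S \<subseteq> M} = {}"
        using matching_if_subset_perfect_matching by blast
      then have "card {M \<in> perfect_matchings X. S \<subseteq> M} = 0"
        by (simp only: card.empty)
      then show "of_nat (card {M \<in> perfect_matchings X. S \<subseteq> M}) * g S = 0"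
        by simp
    qed
  qed
  finally show ?thesis .
qed

lemma sum_perfect_matchings_prod_add:
  fixes c :: "'a set \<Rightarrow> 'b::comm_semiring_1"
  assumes "finite X"
  shows "(\<Sum>M\<in>perfect_matchings X. \<Prod>e\<in>M. b + c e) =
    (\<Sum>S | matching X S. of_nat (pairings (card X - 2 * card S)) *
       ((\<Prod>e\<in>S. c e) * b ^ (card X div 2 - card S)))"
proof -
  have "(\<Sum>M\<in>perfect_matchings X. \<Prod>e\<in>M. b + c e) =
    (\<Sum>S | matching X S. of_nat (card {M \<in> perfect_matchings X. S \<subseteq> M}) *
       ((\<Prod>e\<in>S. c e) * b ^ (card X div 2 - card S)))"
    using assms by (simp add: prod_add_perfect_matching sum_perfect_matchings_sum_Pow)
  also have "\<dots> = (\<Sum>S | matching X S. of_nat (pairings (card X - 2 * card S)) *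
       ((\<Prod>e\<in>S. c e) * b ^ (card X div 2 - card S)))"
    using assms by (intro sum.cong) (simp_all add: card_perfect_matchings_extending)
  finally show ?thesis .
qed

definition sparse_subsets :: "nat \<Rightarrow> nat \<Rightarrow> nat set set" where
  "sparse_subsets n j = {I. I \<subseteq> {..<n} \<and> card I = j \<and> (\<forall>i\<in>I. Suc i \<notin> I)}"

lemma finite_sparse_subsets: "finite (sparse_subsets n j)"
  by (rule finite_subset[of _ "Pow {..<n}"]) (auto simp: sparse_subsets_def)

lemma sparse_subsets_0: "sparse_subsets n 0 = {{}}"
  unfolding sparse_subsets_def by (auto simp: card_eq_0_iff dest: finite_subset)

lemma sparse_subsets_empty: "sparse_subsets 0 (Suc j) = {}"
  by (auto simp: sparse_subsets_def)

text \<open>For n = 0 the truncated n - 1 = 0 still gives the right answer.\<close>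

lemma sparse_subsets_Suc:
  "sparse_subsets (Suc n) (Suc j) = sparse_subsets n (Suc j) \<union> insert n ` sparse_subsets (n - 1) j"
proof (intro equalityI subsetI)
  fix I assume "I \<in> sparse_subsets (Suc n) (Suc j)"
  then have I: "I \<subseteq> {..<Suc n}" "card I = Suc j" "\<forall>i\<in>I. Suc i \<notin> I"
    unfolding sparse_subsets_def by auto
  show "I \<in> sparse_subsets n (Suc j) \<union> insert n ` sparse_subsets (n - 1) j"
  proof (cases "n \<in> I")
    case False
    then have "I \<in> sparse_subsets n (Suc j)"
      using I unfolding sparse_subsets_def by (auto simp: less_Suc_eq)
    then show ?thesis by blast
  next
    case True
    have "I - {n} \<subseteq> {..<n - 1}"
    proof
      fix i assume i: "i \<in> I - {n}"
      then have "i < n" "Suc i \<noteq> n"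
        using I True by (auto simp: less_Suc_eq)
      then show "i \<in> {..<n - 1}" by simp
    qed
    moreover have "card (I - {n}) = j"
      using I True finite_subset[OF I(1)] by simp
    ultimately have "I - {n} \<in> sparse_subsets (n - 1) j"
      using I(3) unfolding sparse_subsets_def by blast
    then show ?thesis
      using True by (metis UnI2 image_eqI insert_Diff)
  qed
next
  fix I assume "I \<in> sparse_subsets n (Suc j) \<union> insert n ` sparse_subsets (n - 1) j"
  then show "I \<in> sparse_subsets (Suc n) (Suc j)"
  proof
    assume "I \<in> insert n ` sparse_subsets (n - 1) j"
    then obtain J where J: "J \<subseteq> {..<n - 1}" "card J = j" "\<forall>i\<in>J. Suc i \<notin> J" "I = insert n J"
      unfolding sparse_subsets_def by auto
    then have "n \<notin> J" "finite J"
      using finite_subset by auto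
    with J show ?thesis
      unfolding sparse_subsets_def by auto
  qed (auto simp: sparse_subsets_def)
qed

lemma card_sparse_subsets: "card (sparse_subsets n j) = (Suc n - j) choose j"
proof (induction n arbitrary: j rule: less_induct)
  case (less n)
  show ?case
  proof (cases j)
    case 0
    then show ?thesis by (simp add: sparse_subsets_0)
  next
    case (Suc i)
    show ?thesis
    proof (cases n)
      case 0
      then show ?thesis using Suc by (simp add: sparse_subsets_empty)
    next
      case (Suc k)
      have "k \<notin> J" if "J \<in> sparse_subsets (k - 1) i" for J
        using that by (auto simp: sparse_subsets_def)
      then have "inj_on (insert k) (sparse_subsets (k - 1) i)"
        by (intro inj_onI) (metis insert_ident)
      then have "card (sparse_subsets n j) =
          card (sparse_subsets k (Suc i)) + card (sparse_subsets (k - 1) i)"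
        unfolding \<open>n = Suc k\<close> \<open>j = Suc i\<close> sparse_subsets_Suc
        by (subst card_Un_disjoint) (auto simp: finite_sparse_subsets card_image sparse_subsets_def)
      also have "\<dots> = (k - i choose Suc i) + (Suc (k - 1) - i choose i)"
        using less.IH \<open>n = Suc k\<close> by simp
      also have "\<dots> = (Suc n - j) choose j"
        using \<open>n = Suc k\<close> \<open>j = Suc i\<close> by (cases "i < k"; cases "k = 0"; cases "i = 0") (auto simp: Suc_diff_le binomial_eq_0)
      finally show ?thesis .
    qed
  qed
qed

definition path_edge :: "nat \<Rightarrow> nat set" where
  "path_edge i = {i, Suc i}"

lemma inj_path_edge: "inj path_edge"
  by (rule injI) (auto simp: path_edge_def doubleton_eq_iff)

lemma card_path_edge_image: "card (path_edge ` I) = card I"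
  by (rule card_image) (rule inj_on_subset[OF inj_path_edge subset_UNIV])

lemma pairwise_disjnt_path_edges: "pairwise disjnt (path_edge ` I) \<longleftrightarrow> (\<forall>i\<in>I. Suc i \<notin> I)"
proof
  assume disj: "pairwise disjnt (path_edge ` I)"
  show "\<forall>i\<in>I. Suc i \<notin> I"
  proof (intro ballI notI)
    fix i assume "i \<in> I" "Suc i \<in> I"
    moreover have "path_edge i \<noteq> path_edge (Suc i)" "\<not> disjnt (path_edge i) (path_edge (Suc i))"
      by (auto simp: path_edge_def disjnt_def doubleton_eq_iff)
    ultimately show False
      using disj unfolding pairwise_def by blast
  qed
next
  assume "\<forall>i\<in>I. Suc i \<notin> I"
  then show "pairwise disjnt (path_edge ` I)"
    unfolding pairwise_def disjnt_def path_edge_def by auto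
qed

lemma matching_path_edges:
  "matching {..<Suc n} (path_edge ` I) \<longleftrightarrow> I \<subseteq> {..<n} \<and> (\<forall>i\<in>I. Suc i \<notin> I)"
  unfolding matching_def pairwise_disjnt_path_edges by (auto simp: path_edge_def)

lemma path_matchings_eq:
  "{S. S \<subseteq> range path_edge \<and> matching {..<Suc n} S \<and> card S = j} =
     (\<lambda>I. path_edge ` I) ` sparse_subsets n j"
proof (intro equalityI subsetI)
  fix S assume "S \<in> {S. S \<subseteq> range path_edge \<and> matching {..<Suc n} S \<and> card S = j}"
  then have S: "S \<subseteq> range path_edge" "matching {..<Suc n} S" "card S = j" by auto
  then obtain I where "S = path_edge ` I"
    by (meson subset_imageE)
  with S show "S \<in> (\<lambda>I. path_edge ` I) ` sparse_subsets n j"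
    by (auto simp: matching_path_edges sparse_subsets_def card_path_edge_image)
qed (auto simp: matching_path_edges sparse_subsets_def card_path_edge_image)

lemma card_path_matchings:
  "card {S. S \<subseteq> range path_edge \<and> matching {..<Suc n} S \<and> card S = j} = (Suc n - j) choose j"
proof -
  have "inj_on (\<lambda>I. path_edge ` I) (sparse_subsets n j)"
    by (intro inj_onI) (simp add: inj_image_eq_iff[OF inj_path_edge])
  then show ?thesis
    unfolding path_matchings_eq by (simp add: card_image card_sparse_subsets)
qed

lemma T_mat_Min_Max:
  assumes "card e = 2"
  shows "T_mat a b (Min e) (Max e) = b + (if e \<in> range path_edge then a - b else 0)"
proof -
  obtain x y where xy: "e = {x, y}" "x \<noteq> y"
    using assms by (meson card_2_iff)
  define u v where "u = min x y" and "v = max x y"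
  have e: "e = {u, v}" "u < v"
    using xy unfolding u_def v_def by (auto simp: min_def max_def insert_commute)
  then have "Min e = u" "Max e = v"
    by auto
  moreover have "e \<in> range path_edge \<longleftrightarrow> v = Suc u"
    using e by (auto simp: path_edge_def doubleton_eq_iff)
  ultimately show ?thesis
    using e by (auto simp: T_mat_def)
qed

lemma sum_matchings_path_weight:
  fixes d :: "'b::comm_semiring_1"
  shows "(\<Sum>S | matching {..<Suc n} S. f (card S) * (\<Prod>e\<in>S. if e \<in> range path_edge then d else 0)) =
    (\<Sum>j = 0..Suc n div 2. of_nat ((Suc n - j) choose j) * f j * d ^ j)"
proof -
  let ?P = "{S. S \<subseteq> range path_edge \<and> matching {..<Suc n} S}"
  have fin: "finite {S. matching {..<Suc n} S}"
    by (rule finite_subset[of _ "Pow (Pow {..<Suc n})"]) (auto dest: matching_subset_Pow)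
  have "(\<Sum>S | matching {..<Suc n} S. f (card S) * (\<Prod>e\<in>S. if e \<in> range path_edge then d else 0)) =
      (\<Sum>S\<in>?P. f (card S) * d ^ card S)"
  proof (rule sum.mono_neutral_cong_right[OF fin])
    show "\<forall>S\<in>{S. matching {..<Suc n} S} - ?P.
        f (card S) * (\<Prod>e\<in>S. if e \<in> range path_edge then d else 0) = 0"
    proof
      fix S assume "S \<in> {S. matching {..<Suc n} S} - ?P"
      then obtain e where "e \<in> S" "e \<notin> range path_edge" "finite S"
        using fin finite_subset[of S "Pow {..<Suc n}"] matching_subset_Pow by blast
      then have "(\<Prod>e\<in>S. if e \<in> range path_edge then d else 0) = 0"
        by (intro prod_zero) auto
      then show "f (card S) * (\<Prod>e\<in>S. if e \<in> range path_edge then d else 0) = 0"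
        by simp
    qed
  qed (auto simp: subset_iff)
  also have "\<dots> = (\<Sum>j = 0..Suc n div 2. \<Sum>S\<in>{S \<in> ?P. card S = j}. f (card S) * d ^ card S)"
  proof (rule sum.group[symmetric])
    show "finite ?P"
      using fin by (rule finite_subset[rotated]) blast
    show "card ` ?P \<subseteq> {0..Suc n div 2}"
      using card_matching_le[of "{..<Suc n}"] by fastforce
  qed simp
  also have "\<dots> = (\<Sum>j = 0..Suc n div 2. of_nat ((Suc n - j) choose j) * f j * d ^ j)"
  proof (rule sum.cong[OF refl])
    fix j
    have "{S \<in> ?P. card S = j} = {S. S \<subseteq> range path_edge \<and> matching {..<Suc n} S \<and> card S = j}"
      by blast
    then show "(\<Sum>S\<in>{S \<in> ?P. card S = j}. f (card S) * d ^ card S) =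
        of_nat ((Suc n - j) choose j) * f j * d ^ j"
      by (simp add: card_path_matchings mult.assoc)
  qed
  finally show ?thesis .
qed

lemma pairings_even: "pairings (2 * k) * fact k * 2 ^ k = (fact (2 * k) :: nat)"
proof (induction k)
  case (Suc k)
  have "2 * Suc k = Suc (Suc (2 * k))" by simp
  have "pairings (2 * Suc k) * fact (Suc k) * 2 ^ Suc k
      = (Suc (2 * k) * (2 * Suc k)) * (pairings (2 * k) * fact k * 2 ^ k)"
    unfolding \<open>2 * Suc k = Suc (Suc (2 * k))\<close> by (simp add: algebra_simps)
  also have "\<dots> = fact (2 * Suc k)"
    unfolding Suc.IH \<open>2 * Suc k = Suc (Suc (2 * k))\<close> by (simp add: algebra_simps)
  finally show ?case .
qed simp

lemma fact_div_eq_choose_pairings: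
  "fact (j + 2 * k) div (fact k * fact j * 2 ^ k) = ((j + 2 * k) choose j) * pairings (2 * k)"
proof -
  have "fact (j + 2 * k) = fact j * fact (2 * k) * ((j + 2 * k) choose j)"
    using binomial_fact_lemma[of j "j + 2 * k"] by simp
  also have "\<dots> = fact j * (pairings (2 * k) * fact k * 2 ^ k) * ((j + 2 * k) choose j)"
    by (simp only: pairings_even)
  also have "\<dots> = ((j + 2 * k) choose j) * pairings (2 * k) * (fact k * fact j * 2 ^ k)"
    by (simp only: ac_simps)
  finally show ?thesis
    by simp
qed

lemma sum_choose_pairings_reflect:
  fixes x y :: "'a::comm_semiring_1"
  shows "(\<Sum>j = 0..m. of_nat ((2 * m - j) choose j) * (of_nat (pairings (2 * m - 2 * j)) * y ^ (m - j)) * x ^ j) =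
    (\<Sum>k = 0..m. x ^ (m - k) * y ^ k * of_nat (fact (m + k) div (fact k * fact (m - k) * 2 ^ k)))"
proof (subst sum.atLeastAtMost_rev, rule sum.cong[OF refl])
  fix k assume "k \<in> {0..m}"
  then obtain j where "m = j + k"
    by (metis atLeastAtMost_iff le_add_diff_inverse2)
  then have idx: "m + 0 - k = j" "m - j = k" "2 * m - j = j + 2 * k" "2 * m - 2 * j = 2 * k"
      "m - k = j" "m + k = j + 2 * k"
    by simp_all
  show "of_nat ((2 * m - (m + 0 - k)) choose (m + 0 - k)) *
      (of_nat (pairings (2 * m - 2 * (m + 0 - k))) * y ^ (m - (m + 0 - k))) * x ^ (m + 0 - k) =
      x ^ (m - k) * y ^ k * of_nat (fact (m + k) div (fact k * fact (m - k) * 2 ^ k))"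
    unfolding idx fact_div_eq_choose_pairings by (simp add: ac_simps)
qed

theorem mainTheorem1:
  fixes a b :: "'a::comm_ring_1" and m :: nat
  assumes "m \<ge> 1"
  shows "hafnian (2 * m) (T_mat a b) =
    (\<Sum>k = 0..m. (a - b) ^ (m - k) * b ^ k *
       of_nat (fact (m + k) div (fact k * fact (m - k) * 2 ^ k)))"
proof -
  define n where "n = 2 * m - 1"
  have n: "2 * m = Suc n"
    using assms unfolding n_def by simp
  define c where "c e = (if e \<in> range path_edge then a - b else 0)" for e
  have "hafnian (2 * m) (T_mat a b) = (\<Sum>M\<in>perfect_matchings {..<2 * m}. \<Prod>e\<in>M. b + c e)"
    unfolding hafnian_def atLeast0LessThan
  proof (intro sum.cong prod.cong refl)
    fix M e assume "M \<in> perfect_matchings {..<2 * m}" "e \<in> M"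
    then have "card e = 2"
      using perfect_matchings_edge by blast
    then show "T_mat a b (Min e) (Max e) = b + c e"
      unfolding c_def by (rule T_mat_Min_Max)
  qed
  also have "\<dots> = (\<Sum>S | matching {..<2 * m} S.
      of_nat (pairings (2 * m - 2 * card S)) * b ^ (m - card S) * (\<Prod>e\<in>S. c e))"
    by (simp add: sum_perfect_matchings_prod_add ac_simps)
  also have "\<dots> = (\<Sum>j = 0..m. of_nat ((2 * m - j) choose j) *
      (of_nat (pairings (2 * m - 2 * j)) * b ^ (m - j)) * (a - b) ^ j)"
    using sum_matchings_path_weight[where d = "a - b" and n = n
        and f = "\<lambda>j. of_nat (pairings (2 * m - 2 * j)) * b ^ (m - j)"]
    unfolding c_def n[symmetric] by simp
  also have "\<dots> = (\<Sum>k = 0..m. (a - b) ^ (m - k) * b ^ k *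
      of_nat (fact (m + k) div (fact k * fact (m - k) * 2 ^ k)))"
    by (rule sum_choose_pairings_reflect)
  finally show ?thesis .
qed

end
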